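(* For every non-negative integer $n$, \[ \sum_{k=0}^{n}(-1)^{k}\frac{2^{2k}}{2k+1}\frac{\binom{n}{k}}{\binom{2k}{k}}=\frac{1}{2n+1} \qquad\text{and}\qquad \sum_{k=0}^{n}(-1)^{k+1}2^{2k}\frac{k}{2k+1}\frac{\binom{n}{k}}{\binom{2k}{k}}=\frac{2n}{(2n+1)(2n-1)}. \] *)

theory Defs
  imports Complex_Main
begin

end

theory Submission
  imports Defs
begin

text \<open>\<open>beta_half n m = \<integral>\<^sub>0\<^sup>1 x\<^sup>2\<^sup>n (1 - x\<^sup>2)\<^sup>m dx = m! / (2 (n + 1/2)\<^sub>m\<^sub>+\<^sub>1)\<close>, and
  \<open>beta_half 0 k = 4\<^sup>k / ((2k + 1) C(2k, k))\<close>, so the first sum is the \<open>n\<close>-th finite difference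
  \<open>\<Sum>\<^sub>k (-1)\<^sup>k C(n, k) beta_half 0 k\<close>. Splitting \<open>(1 - x\<^sup>2)\<^sup>m = x\<^sup>2 (1 - x\<^sup>2)\<^sup>m + (1 - x\<^sup>2)\<^sup>m\<^sup>+\<^sup>1\<close>
  shows that the finite differences of \<open>beta_half 0\<close> are \<open>beta_half n\<close>, so the first sum is
  \<open>beta_half n 0 = 1 / (2n + 1)\<close>. Absorbing \<open>k C(n, k) = n C(n - 1, k - 1)\<close> turns the second sum
  into \<open>n beta_half (n - 1) 1\<close>.\<close>

lemma alternating_binomial_sum_Suc:
  fixes f :: "nat \<Rightarrow> 'a::comm_ring_1"
  shows "(\<Sum>k\<le>Suc n. (-1)^k * of_nat (Suc n choose k) * f k) =
         (\<Sum>k\<le>n. (-1)^k * of_nat (n choose k) * f k) -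
         (\<Sum>k\<le>n. (-1)^k * of_nat (n choose k) * f (Suc k))"
proof -
  have "(\<Sum>k\<le>Suc n. (-1)^k * of_nat (Suc n choose k) * f k) =
        f 0 + (\<Sum>k\<le>n. (-1)^Suc k * of_nat (n choose Suc k) * f (Suc k))
            + (\<Sum>k\<le>n. (-1)^Suc k * of_nat (n choose k) * f (Suc k))"
    by (subst sum.atMost_Suc_shift) (simp add: sum.distrib[symmetric] algebra_simps)
  also have "f 0 + (\<Sum>k\<le>n. (-1)^Suc k * of_nat (n choose Suc k) * f (Suc k)) =
             (\<Sum>k\<le>Suc n. (-1)^k * of_nat (n choose k) * f k)"
    by (subst sum.atMost_Suc_shift) simp
  also have "\<dots> = (\<Sum>k\<le>n. (-1)^k * of_nat (n choose k) * f k)"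
    by (simp add: binomial_eq_0)
  also have "(\<Sum>k\<le>n. (-1)^Suc k * of_nat (n choose k) * f (Suc k)) =
             - (\<Sum>k\<le>n. (-1)^k * of_nat (n choose k) * f (Suc k))"
    by (simp add: sum_negf[symmetric])
  finally show ?thesis
    by simp
qed

lemma alternating_binomial_sum_iterated_difference:
  fixes F :: "nat \<Rightarrow> nat \<Rightarrow> 'a::comm_ring_1"
  assumes difference: "\<And>n m. F (Suc n) m = F n m - F n (Suc m)"
  shows "(\<Sum>k\<le>n. (-1)^k * of_nat (n choose k) * F 0 (k + m)) = F n m"
proof (induction n arbitrary: m)
  case 0
  then show ?case
    by simp
next
  case (Suc n)
  have "(\<Sum>k\<le>Suc n. (-1)^k * of_nat (Suc n choose k) * F 0 (k + m)) = F n m - F n (Suc m)"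
    using alternating_binomial_sum_Suc[of n "\<lambda>k. F 0 (k + m)"] Suc.IH[of m] Suc.IH[of "Suc m"]
    by simp
  then show ?case
    by (simp add: difference)
qed

lemma alternating_binomial_sum_absorb:
  fixes f :: "nat \<Rightarrow> 'a::comm_ring_1"
  shows "(\<Sum>k\<le>Suc n. (-1)^(k+1) * of_nat k * of_nat (Suc n choose k) * f k) =
         of_nat (Suc n) * (\<Sum>k\<le>n. (-1)^k * of_nat (n choose k) * f (Suc k))"
proof -
  have "(\<Sum>k\<le>Suc n. (-1)^(k+1) * of_nat k * of_nat (Suc n choose k) * f k) =
        (\<Sum>k\<le>n. (-1)^k * (of_nat (Suc k) * of_nat (Suc n choose Suc k)) * f (Suc k))"
    by (subst sum.atMost_Suc_shift) (simp del: binomial_Suc_Suc of_nat_Suc add: mult.assoc)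
  also have "\<dots> = (\<Sum>k\<le>n. (-1)^k * (of_nat (Suc n) * of_nat (n choose k)) * f (Suc k))"
    by (simp only: Suc_times_binomial flip: of_nat_mult)
  finally show ?thesis
    by (simp add: sum_distrib_left mult_ac)
qed

lemma pochhammer_beta_recurrence:
  fixes a :: real
  assumes "a > 0"
  shows "fact m / pochhammer a (Suc m) - fact (Suc m) / pochhammer a (Suc (Suc m)) =
         fact m / pochhammer (a + 1) (Suc m)"
proof -
  define p where "p = pochhammer a (Suc m)"
  define d where "d = a + real m + 1"
  have "p > 0" "d > 0"
    using assms by (simp_all add: p_def d_def pochhammer_pos)
  have last_factor: "pochhammer a (Suc (Suc m)) = p * d"
    by (simp add: p_def d_def pochhammer_Suc[of a "Suc m"] add_ac)
  have "fact m / p - fact (Suc m) / pochhammer a (Suc (Suc m)) =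
        fact m / p - fact m * (d - a) / (p * d)"
    by (simp add: last_factor d_def algebra_simps)
  also have "\<dots> = fact m * a / (p * d)"
    using \<open>p > 0\<close> \<open>d > 0\<close> by (simp add: field_simps)
  also have "\<dots> = fact m * a / (a * pochhammer (a + 1) (Suc m))"
    by (simp only: last_factor[symmetric] pochhammer_rec)
  also have "\<dots> = fact m / pochhammer (a + 1) (Suc m)"
    using assms by simp
  finally show ?thesis
    by (simp only: p_def)
qed

definition beta_half :: "nat \<Rightarrow> nat \<Rightarrow> real" where
  "beta_half n m = fact m / pochhammer (real n + 1/2) (Suc m) / 2"

lemma beta_half_Suc_left: "beta_half (Suc n) m = beta_half n m - beta_half n (Suc m)"
proof -
  have "beta_half n m - beta_half n (Suc m) =
        (fact m / pochhammer (real n + 1/2) (Suc m) -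
         fact (Suc m) / pochhammer (real n + 1/2) (Suc (Suc m))) / 2"
    unfolding beta_half_def by (simp only: diff_divide_distrib)
  also have "\<dots> = fact m / pochhammer (real n + 1/2 + 1) (Suc m) / 2"
    by (subst pochhammer_beta_recurrence) simp_all
  finally show ?thesis
    by (simp add: beta_half_def add_ac)
qed

lemma beta_half_0_right: "beta_half n 0 = 1 / (2 * real n + 1)"
  by (simp add: beta_half_def field_simps)

lemma beta_half_1_right: "beta_half n 1 = 2 / ((2 * real n + 1) * (2 * real n + 3))"
  by (simp add: beta_half_def pochhammer_Suc divide_simps) (simp add: algebra_simps)

lemma beta_half_0_left: "beta_half 0 k = 4^k / ((2 * real k + 1) * real ((2*k) choose k))"
proof -
  have "fact k * real ((2*k) choose k) = 4^k * pochhammer (1/2) k"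
    using fact_double[of k, where 'a=real] by (simp add: binomial_fact power_mult)
  then have "real ((2*k) choose k) = 4^k * pochhammer (1/2) k / fact k"
    by (simp add: field_simps)
  moreover have "pochhammer (1/2) k > (0::real)"
    by (simp add: pochhammer_pos)
  ultimately show ?thesis
    unfolding beta_half_def by (simp add: pochhammer_Suc divide_simps) (simp add: algebra_simps)
qed

lemma alternating_binomial_sum_beta_half:
  "(\<Sum>k\<le>n. (-1)^k * real (n choose k) * beta_half 0 (k + m)) = beta_half n m"
  by (rule alternating_binomial_sum_iterated_difference) (rule beta_half_Suc_left)

theorem corollary28:
  fixes n :: nat
  shows "((\<Sum>k=0..n. (-1::real)^k * (2^(2*k) / (2*real k + 1)) * (real (n choose k) / real ((2*k) choose k)))
           = 1 / (2*real n + 1)) \<and>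
         ((\<Sum>k=0..n. (-1::real)^(k+1) * 2^(2*k) * (real k / (2*real k + 1)) * (real (n choose k) / real ((2*k) choose k)))
           = 2*real n / ((2*real n + 1) * (2*real n - 1)))"
proof -
  have first_terms: "(-1::real)^k * (2^(2*k) / (2*real k + 1)) * (real (n choose k) / real ((2*k) choose k))
      = (-1)^k * real (n choose k) * beta_half 0 k" for k
    by (simp add: beta_half_0_left power_mult)
  have second_terms: "(-1::real)^(k+1) * 2^(2*k) * (real k / (2*real k + 1)) * (real (n choose k) / real ((2*k) choose k))
      = (-1)^(k+1) * real k * real (n choose k) * beta_half 0 k" for k
    by (simp add: beta_half_0_left power_mult)
  have first: "(\<Sum>k\<le>n. (-1)^k * real (n choose k) * beta_half 0 k) = 1 / (2*real n + 1)"
    using alternating_binomial_sum_beta_half[of n 0] by (simp add: beta_half_0_right)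
  have second: "(\<Sum>k\<le>n. (-1)^(k+1) * real k * real (n choose k) * beta_half 0 k)
      = 2*real n / ((2*real n + 1) * (2*real n - 1))"
  proof (cases n)
    case (Suc m)
    have "(\<Sum>k\<le>Suc m. (-1)^(k+1) * real k * real (Suc m choose k) * beta_half 0 k)
        = real (Suc m) * beta_half m 1"
      using alternating_binomial_sum_absorb[of m "beta_half 0"] alternating_binomial_sum_beta_half[of m 1]
      by simp
    then show ?thesis
      unfolding Suc beta_half_1_right by (simp add: field_simps)
  qed simp
  show ?thesis
    unfolding atLeast0AtMost first_terms second_terms first second by simp
qed

end
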